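(* Let $k\ge2$ and let $G$ be a $k$-uniform hypergraph with $n$ vertices, maximum degree $\Delta$, and no isolated vertices. Then $w(G)\le 10k^2n\Delta$.
   Context: $K_N^{(k)}$ denotes the complete $k$-uniform hypergraph on vertex set $[N]$. For a $k$-uniform hypergraph $G$ without isolated vertices, $w(G)$ is the minimum $N$ such that for every map $f:E(K_N^{(k)})\to E(K_N^{(k)})$ satisfying $f(e)\cap e=\emptyset$ for every edge $e$, there is a copy $G^*$ of $G$ in $K_N^{(k)}$ such that $f(e)\cap V(G^* )=\emptyset$ for every $e\in E(G^* )$. The degree of a vertex is the number of edges containing it. *)

theory Defs
  imports Main
begin

(* A k-uniform hypergraph without isolated vertices is represented by its finite
   edge set G :: 'a set set, every edge being a k-element set; its vertex set is
   the union of its edges (no isolated vertices). *)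

definition uniform_hypergraph :: "nat \<Rightarrow> 'a set set \<Rightarrow> bool" where
  "uniform_hypergraph k G \<longleftrightarrow> finite G \<and> (\<forall>e\<in>G. card e = k)"

definition hvertices :: "'a set set \<Rightarrow> 'a set" where
  "hvertices G = \<Union>G"

definition hdegree :: "'a set set \<Rightarrow> 'a \<Rightarrow> nat" where
  "hdegree G v = card {e\<in>G. v \<in> e}"

definition max_degree :: "'a set set \<Rightarrow> nat" where
  "max_degree G = Max (insert 0 (hdegree G ` hvertices G))"

definition complete_edges :: "nat \<Rightarrow> nat \<Rightarrow> nat set set" where
  "complete_edges N k = {e. e \<subseteq> {..<N} \<and> card e = k}"

definition admissible_map :: "nat \<Rightarrow> nat \<Rightarrow> (nat set \<Rightarrow> nat set) \<Rightarrow> bool" where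
  "admissible_map N k f \<longleftrightarrow>
     (\<forall>e\<in>complete_edges N k. f e \<in> complete_edges N k \<and> f e \<inter> e = {})"

(* The property defining w(G) at a given N: for every admissible f there is a copy
   G-star of G in K_N^(k) (the image of G under an injection \<phi> of V(G) into [N]) such
   that f(e) \<inter> V(G-star) = {} for every edge e of G-star. *)
definition w_property :: "nat \<Rightarrow> nat \<Rightarrow> 'a set set \<Rightarrow> bool" where
  "w_property N k G \<longleftrightarrow>
     (\<forall>f. admissible_map N k f \<longrightarrow>
        (\<exists>\<phi> :: 'a \<Rightarrow> nat. inj_on \<phi> (hvertices G) \<and> \<phi> ` hvertices G \<subseteq> {..<N} \<and>
           (\<forall>e\<in>G. f (\<phi> ` e) \<inter> \<phi> ` hvertices G = {})))"

definition w_number :: "nat \<Rightarrow> 'a set set \<Rightarrow> nat" where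
  "w_number k G = (LEAST N. \<forall>M\<ge>N. w_property M k G)"

end

(* Choose the images \<phi> v \<in> [M] of the vertices of G independently and uniformly. The copy
   \<phi>(G) fails only through bad events: two vertices collide, or for an edge e and a vertex
   u \<notin> e the value \<phi> u lies in f(\<phi> e) (vertices of e are safe since f(e) \<inter> e = {}).
   A bad event depends on at most k + 1 coordinates, and whatever the other values are, it holds
   for at most k of the M values of one designated coordinate; that coordinate lies in the
   support of at most 4 n \<Delta> bad events. The Lovasz Local Lemma, in a counting form proved by
   the usual induction, therefore yields a good \<phi> as soon as M \<ge> 16 k n \<Delta>, which
   M \<ge> 10 k^2 n \<Delta> guarantees for k \<ge> 2. *)
theory Submission
  imports Defs Complex_Main "HOL-Library.FuncSet"
begin

lemma local_lemma_conditional_le: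
  fixes A :: "'i \<Rightarrow> 'w set" and p :: "'i \<Rightarrow> real" and N :: "'i \<Rightarrow> 'i set"
  assumes fin\<Omega>: "finite \<Omega>" and finI: "finite I"
    and N_sub: "\<And>i. i \<in> I \<Longrightarrow> N i \<subseteq> I"
    and p_nonneg: "\<And>i. i \<in> I \<Longrightarrow> 0 \<le> p i"
    and p_sum: "\<And>i. i \<in> I \<Longrightarrow> sum p (N i) \<le> 1/4"
    and indep: "\<And>i S. i \<in> I \<Longrightarrow> S \<subseteq> I - N i - {i} \<Longrightarrow>
      real (card (A i \<inter> (\<Omega> - \<Union>(A ` S)))) \<le> p i * card (\<Omega> - \<Union>(A ` S))"
    and S: "S \<subseteq> I" and i: "i \<in> I - S"
  shows "real (card (A i \<inter> (\<Omega> - \<Union>(A ` S)))) \<le> 2 * p i * card (\<Omega> - \<Union>(A ` S))"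
  using S i
proof (induction "card S" arbitrary: S i rule: less_induct)
  case less
  define S1 where "S1 = S \<inter> N i"
  define S2 where "S2 = S - N i"
  let ?Y = "\<Omega> - \<Union>(A ` S)" and ?Y2 = "\<Omega> - \<Union>(A ` S2)"
  have iI: "i \<in> I" using less.prems by auto
  have finS: "finite S" using less.prems finI finite_subset by blast
  have Y_eq: "?Y = ?Y2 - \<Union>(A ` S1)"
    unfolding S1_def S2_def by blast
  have "card (A i \<inter> ?Y) \<le> card (A i \<inter> ?Y2)"
    using Y_eq fin\<Omega> by (intro card_mono) auto
  also have "real (card (A i \<inter> ?Y2)) \<le> p i * card ?Y2"
    using less.prems by (intro indep[OF iI]) (auto simp: S2_def)
  also have "card ?Y2 \<le> 2 * card ?Y"
  proof (cases "S1 = {}")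
    case True
    then show ?thesis by (simp add: S1_def S2_def Diff_triv)
  next
    case False
    have "card S2 < card S"
      using False finS unfolding S1_def S2_def by (intro psubset_card_mono) auto
    then have IH: "real (card (A j \<inter> ?Y2)) \<le> 2 * p j * card ?Y2" if "j \<in> S1" for j
      using less.hyps[of S2 j] that less.prems unfolding S1_def S2_def by auto
    have "card ?Y2 \<le> card (?Y \<union> (\<Union>j\<in>S1. A j \<inter> ?Y2))"
      using Y_eq fin\<Omega> by (intro card_mono) auto
    also have "\<dots> \<le> card ?Y + (\<Sum>j\<in>S1. card (A j \<inter> ?Y2))"
      using card_Un_le card_UN_le[of S1 "\<lambda>j. A j \<inter> ?Y2"] finS unfolding S1_def
      by (meson add_left_mono finite_Int order_trans)
    finally have "real (card ?Y2) \<le> card ?Y + (\<Sum>j\<in>S1. real (card (A j \<inter> ?Y2)))"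
      by (metis of_nat_add of_nat_le_iff of_nat_sum)
    also have "(\<Sum>j\<in>S1. real (card (A j \<inter> ?Y2))) \<le> (\<Sum>j\<in>S1. 2 * p j * card ?Y2)"
      by (rule sum_mono) (rule IH)
    also have "\<dots> = 2 * card ?Y2 * sum p S1"
      by (subst sum_distrib_left) (simp add: mult_ac)
    also have "sum p S1 \<le> sum p (N i)"
      using N_sub[OF iI] p_nonneg finI unfolding S1_def
      by (intro sum_mono2) (auto intro: finite_subset)
    then have "2 * card ?Y2 * sum p S1 \<le> 2 * card ?Y2 * (1/4)"
      using p_sum[OF iI] by (intro mult_left_mono) auto
    finally show ?thesis by simp
  qed
  then have "p i * card ?Y2 \<le> p i * (2 * card ?Y)"
    using p_nonneg[OF iI] by (intro mult_left_mono) auto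
  finally show ?case by simp
qed

text \<open>By the previous lemma each further event removes at most half of the points that
  avoid the events chosen so far.\<close>
lemma local_lemma_counting:
  fixes A :: "'i \<Rightarrow> 'w set" and p :: "'i \<Rightarrow> real" and N :: "'i \<Rightarrow> 'i set"
  assumes fin\<Omega>: "finite \<Omega>" and finI: "finite I" and \<Omega>_ne: "\<Omega> \<noteq> {}"
    and N_sub: "\<And>i. i \<in> I \<Longrightarrow> N i \<subseteq> I"
    and p_bounds: "\<And>i. i \<in> I \<Longrightarrow> 0 \<le> p i \<and> p i \<le> 1/4"
    and p_sum: "\<And>i. i \<in> I \<Longrightarrow> sum p (N i) \<le> 1/4"
    and indep: "\<And>i S. i \<in> I \<Longrightarrow> S \<subseteq> I - N i - {i} \<Longrightarrow>
      real (card (A i \<inter> (\<Omega> - \<Union>(A ` S)))) \<le> p i * card (\<Omega> - \<Union>(A ` S))"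
  shows "\<Omega> - \<Union>(A ` I) \<noteq> {}"
proof -
  have "(1/2) ^ card F * card \<Omega> \<le> real (card (\<Omega> - \<Union>(A ` F)))" if "finite F" "F \<subseteq> I" for F
    using that
  proof (induction F rule: finite_induct)
    case empty
    then show ?case by simp
  next
    case (insert i F)
    let ?Y = "\<Omega> - \<Union>(A ` F)"
    have "\<Omega> - \<Union>(A ` insert i F) = ?Y - A i \<inter> ?Y" by blast
    then have "real (card (\<Omega> - \<Union>(A ` insert i F))) = card ?Y - real (card (A i \<inter> ?Y))"
      using fin\<Omega> by (simp add: card_Diff_subset card_mono of_nat_diff)
    moreover have "real (card (A i \<inter> ?Y)) \<le> 2 * p i * card ?Y"
      using insert by (intro local_lemma_conditional_le[OF fin\<Omega> finI N_sub _ p_sum indep])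
        (auto simp: p_bounds)
    moreover have "2 * p i * card ?Y \<le> 2 * (1/4) * card ?Y"
      using p_bounds[of i] insert.prems by (intro mult_right_mono) auto
    ultimately have "(1/2) * card ?Y \<le> real (card (\<Omega> - \<Union>(A ` insert i F)))"
      by linarith
    then show ?case using insert by simp
  qed
  moreover have "0 < (1/2::real) ^ card I * card \<Omega>"
    using \<Omega>_ne fin\<Omega> by (simp add: card_gt_0_iff)
  ultimately have "0 < card (\<Omega> - \<Union>(A ` I))"
    using finI by (meson less_le_trans of_nat_0_less_iff order_refl)
  then show ?thesis
    by (simp add: card_gt_0_iff)
qed

text \<open>The map \<open>(\<phi>, y) \<mapsto> (\<phi>(c := y), \<phi> c)\<close> injects \<open>(B \<inter> Y) \<times> R\<close> into the pairs \<open>(\<psi>, z)\<close>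
  with \<open>\<psi> \<in> Y\<close> and \<open>\<psi>(c := z) \<in> B\<close>; its inverse is the same map.\<close>
lemma card_resample_double_count:
  fixes Y B :: "('v \<Rightarrow> 'b) set"
  assumes finY: "finite Y" and finR: "finite R"
    and closed: "\<And>\<phi> y. \<phi> \<in> Y \<Longrightarrow> y \<in> R \<Longrightarrow> \<phi>(c := y) \<in> Y"
    and range: "\<And>\<phi>. \<phi> \<in> Y \<Longrightarrow> \<phi> c \<in> R"
    and bound: "\<And>\<phi>. \<phi> \<in> Y \<Longrightarrow> card {y \<in> R. \<phi>(c := y) \<in> B} \<le> q"
  shows "card R * card (B \<inter> Y) \<le> q * card Y"
proof -
  let ?swap = "\<lambda>(\<phi>, y). (\<phi>(c := y), \<phi> c)"
  have "card R * card (B \<inter> Y) = card ((B \<inter> Y) \<times> R)"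
    by (simp add: card_cartesian_product)
  also have "\<dots> \<le> card (SIGMA \<psi>:Y. {z \<in> R. \<psi>(c := z) \<in> B})"
  proof (rule card_inj_on_le)
    show "inj_on ?swap ((B \<inter> Y) \<times> R)"
      by (rule inj_onI) (auto simp: fun_upd_idem_iff fun_eq_iff split: if_splits)
    show "?swap ` ((B \<inter> Y) \<times> R) \<subseteq> (SIGMA \<psi>:Y. {z \<in> R. \<psi>(c := z) \<in> B})"
      using closed range by auto
  qed (use finY finR in auto)
  also have "\<dots> = (\<Sum>\<psi>\<in>Y. card {z \<in> R. \<psi>(c := z) \<in> B})"
    using finY finR by simp
  also have "\<dots> \<le> q * card Y"
    using sum_mono[of Y _ "\<lambda>_. q"] bound by (simp add: mult.commute)
  finally show ?thesis .
qed

text \<open>Avoiding events whose support misses the pivot of \<open>i\<close> is unaffected by resampling the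
  pivot, so conditioned on it \<open>i\<close> still has probability at most \<open>q / M\<close>.\<close>
lemma resampling_local_lemma:
  fixes bad :: "'i \<Rightarrow> ('v \<Rightarrow> nat) \<Rightarrow> bool" and pivot :: "'i \<Rightarrow> 'v" and support :: "'i \<Rightarrow> 'v set"
  assumes finV: "finite V" and finI: "finite I" and M_pos: "0 < M"
    and pivot: "\<And>i. i \<in> I \<Longrightarrow> pivot i \<in> V"
    and depends_on_support: "\<And>j x y \<phi>. x \<notin> support j \<Longrightarrow> bad j (\<phi>(x := y)) = bad j \<phi>"
    and resample: "\<And>i \<phi>. i \<in> I \<Longrightarrow> \<phi> \<in> V \<rightarrow>\<^sub>E {..<M} \<Longrightarrow>
      card {y \<in> {..<M}. bad i (\<phi>(pivot i := y))} \<le> q"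
    and q_small: "4 * q \<le> M"
    and sparse: "\<And>i. i \<in> I \<Longrightarrow> 4 * q * card {j \<in> I. j \<noteq> i \<and> pivot i \<in> support j} \<le> M"
  shows "\<exists>\<phi> \<in> V \<rightarrow>\<^sub>E {..<M}. \<forall>i \<in> I. \<not> bad i \<phi>"
proof -
  define \<Omega> where "\<Omega> = V \<rightarrow>\<^sub>E {..<M}"
  define A where "A i = {\<phi> \<in> \<Omega>. bad i \<phi>}" for i
  define N where "N i = {j \<in> I. j \<noteq> i \<and> pivot i \<in> support j}" for i
  define p :: "'i \<Rightarrow> real" where "p i = q / M" for i
  have fin\<Omega>: "finite \<Omega>"
    unfolding \<Omega>_def using finV by (simp add: finite_PiE)
  have p_bounds: "0 \<le> p i \<and> p i \<le> 1/4" for i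
    using q_small M_pos by (simp add: p_def field_simps)
  have p_sum: "sum p (N i) \<le> 1/4" if "i \<in> I" for i
  proof -
    have "real (4 * q * card (N i)) \<le> M"
      using sparse[OF that] unfolding N_def of_nat_le_iff .
    have "sum p (N i) = real (4 * q * card (N i)) / (4 * M)"
      by (simp add: p_def)
    also have "\<dots> \<le> M / (4 * M)"
      using \<open>real (4 * q * card (N i)) \<le> M\<close> by (rule divide_right_mono) simp
    finally show ?thesis
      using M_pos by simp
  qed
  have indep: "real (card (A i \<inter> (\<Omega> - \<Union>(A ` S)))) \<le> p i * card (\<Omega> - \<Union>(A ` S))"
    if i: "i \<in> I" and S: "S \<subseteq> I - N i - {i}" for i S
  proof -
    let ?Y = "\<Omega> - \<Union>(A ` S)"
    have "pivot i \<notin> support j" if "j \<in> S" for j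
      using that S by (auto simp: N_def)
    then have closed: "\<phi>(pivot i := y) \<in> ?Y" if "\<phi> \<in> ?Y" "y \<in> {..<M}" for \<phi> y
      using that pivot[OF i] depends_on_support by (auto simp: \<Omega>_def A_def PiE_iff extensional_def)
    have "card {..<M} * card (A i \<inter> ?Y) \<le> q * card ?Y"
    proof (rule card_resample_double_count[OF _ _ closed])
      show "card {y \<in> {..<M}. \<phi>(pivot i := y) \<in> A i} \<le> q" if "\<phi> \<in> ?Y" for \<phi>
      proof -
        have "card {y \<in> {..<M}. \<phi>(pivot i := y) \<in> A i} \<le> card {y \<in> {..<M}. bad i (\<phi>(pivot i := y))}"
          by (rule card_mono) (auto simp: A_def)
        also have "\<dots> \<le> q"
          using that by (intro resample[OF i]) (simp add: \<Omega>_def)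
        finally show ?thesis .
      qed
    qed (use fin\<Omega> pivot[OF i] in \<open>auto simp: \<Omega>_def PiE_iff\<close>)
    then have "real M * card (A i \<inter> ?Y) \<le> real q * card ?Y"
      by (metis card_lessThan of_nat_le_iff of_nat_mult)
    then show ?thesis
      using M_pos by (simp add: p_def field_simps)
  qed
  have "\<Omega> \<noteq> {}"
    using M_pos by (auto simp: \<Omega>_def PiE_eq_empty_iff)
  then have "\<Omega> - \<Union>(A ` I) \<noteq> {}"
    by (intro local_lemma_counting[OF fin\<Omega> finI _ _ p_bounds p_sum indep]) (auto simp: N_def)
  then show ?thesis by (auto simp: \<Omega>_def A_def)
qed

lemma finite_hvertices:
  assumes "uniform_hypergraph k G" and "0 < k"
  shows "finite (hvertices G)"
  using assms unfolding uniform_hypergraph_def hvertices_def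
  by (intro finite_Union) (auto intro: card_ge_0_finite)

lemma hdegree_le_max_degree:
  assumes "finite (hvertices G)"
  shows "hdegree G v \<le> max_degree G"
proof (cases "v \<in> hvertices G")
  case True
  then show ?thesis
    using assms unfolding max_degree_def by (intro Max_ge) auto
next
  case False
  then have "{e \<in> G. v \<in> e} = {}"
    by (auto simp: hvertices_def)
  then show ?thesis
    unfolding hdegree_def by (metis card.empty zero_le)
qed

lemma card_edges_le_card_hvertices_mult_max_degree:
  assumes U: "uniform_hypergraph k G" and k: "0 < k"
  shows "card G \<le> card (hvertices G) * max_degree G"
proof -
  have finV: "finite (hvertices G)"
    using finite_hvertices[OF U k] .
  have "G \<subseteq> (\<Union>v \<in> hvertices G. {e \<in> G. v \<in> e})"
  proof
    fix e assume e: "e \<in> G"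
    then have "e \<noteq> {}"
      using U k by (auto simp: uniform_hypergraph_def)
    then obtain v where "v \<in> e"
      by blast
    then show "e \<in> (\<Union>v \<in> hvertices G. {e \<in> G. v \<in> e})"
      using e by (auto simp: hvertices_def)
  qed
  then have "card G \<le> card (\<Union>v \<in> hvertices G. {e \<in> G. v \<in> e})"
    using U finV by (intro card_mono) (auto simp: uniform_hypergraph_def)
  also have "\<dots> \<le> (\<Sum>v \<in> hvertices G. hdegree G v)"
    unfolding hdegree_def using finV by (rule card_UN_le)
  also have "\<dots> \<le> (\<Sum>v \<in> hvertices G. max_degree G)"
    using finV by (intro sum_mono hdegree_le_max_degree)
  finally show ?thesis
    by simp
qed

datatype 'a bad_event = Collision 'a 'a | Hit "'a set" 'a

fun occurs :: "(nat set \<Rightarrow> nat set) \<Rightarrow> 'a bad_event \<Rightarrow> ('a \<Rightarrow> nat) \<Rightarrow> bool" where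
  "occurs f (Collision a b) \<phi> \<longleftrightarrow> \<phi> a = \<phi> b"
| "occurs f (Hit e u) \<phi> \<longleftrightarrow> inj_on \<phi> e \<and> \<phi> u \<in> f (\<phi> ` e)"

fun support :: "'a bad_event \<Rightarrow> 'a set" where
  "support (Collision a b) = {a, b}"
| "support (Hit e u) = insert u e"

fun pivot :: "'a bad_event \<Rightarrow> 'a" where
  "pivot (Collision a b) = a"
| "pivot (Hit e u) = u"

definition bad_events :: "'a set set \<Rightarrow> 'a bad_event set" where
  "bad_events G =
     {Collision a b | a b. a \<in> hvertices G \<and> b \<in> hvertices G \<and> a \<noteq> b} \<union>
     {Hit e u | e u. e \<in> G \<and> u \<in> hvertices G \<and> u \<notin> e}"

lemma occurs_Hit_fun_upd:
  assumes "x \<notin> e"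
  shows "occurs f (Hit e u) (\<phi>(x := y)) \<longleftrightarrow> inj_on \<phi> e \<and> (\<phi>(x := y)) u \<in> f (\<phi> ` e)"
proof -
  have "inj_on (\<phi>(x := y)) e = inj_on \<phi> e"
    by (rule inj_on_cong) (use assms in auto)
  moreover have "(\<phi>(x := y)) ` e = \<phi> ` e"
    using assms by auto
  ultimately show ?thesis
    by simp
qed

lemma occurs_fun_upd:
  assumes "x \<notin> support i"
  shows "occurs f i (\<phi>(x := y)) = occurs f i \<phi>"
proof (cases i)
  case (Hit e u)
  then have "x \<notin> e" "x \<noteq> u"
    using assms by auto
  then show ?thesis
    using Hit by (simp add: occurs_Hit_fun_upd del: occurs.simps) simp
qed (use assms in auto)

lemma pivot_mem_hvertices: "i \<in> bad_events G \<Longrightarrow> pivot i \<in> hvertices G"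
  by (auto simp: bad_events_def)

lemma finite_bad_events:
  assumes "finite G" and "finite (hvertices G)"
  shows "finite (bad_events G)"
proof -
  have "bad_events G \<subseteq> case_prod Collision ` (hvertices G \<times> hvertices G) \<union>
      case_prod Hit ` (G \<times> hvertices G)"
    by (auto simp: bad_events_def)
  then show ?thesis
    using assms by (auto intro: finite_subset)
qed

lemma image_mem_complete_edges:
  "inj_on \<phi> e \<Longrightarrow> card e = k \<Longrightarrow> \<phi> ` e \<subseteq> {..<M} \<Longrightarrow> \<phi> ` e \<in> complete_edges M k"
  by (simp add: complete_edges_def card_image)

lemma card_resample_occurs_le:
  assumes f: "admissible_map M k f" and U: "uniform_hypergraph k G" and k: "0 < k"
    and i: "i \<in> bad_events G" and \<phi>: "\<phi> \<in> hvertices G \<rightarrow>\<^sub>E {..<M}"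
  shows "card {y \<in> {..<M}. occurs f i (\<phi>(pivot i := y))} \<le> k"
proof (cases i)
  case (Collision a b)
  then have "{y \<in> {..<M}. occurs f i (\<phi>(pivot i := y))} \<subseteq> {\<phi> b}"
    using i by (auto simp: bad_events_def)
  then have "card {y \<in> {..<M}. occurs f i (\<phi>(pivot i := y))} \<le> card {\<phi> b}"
    by (rule card_mono[rotated]) simp
  then show ?thesis
    using k by simp
next
  case (Hit e u)
  then have e: "e \<in> G" "u \<notin> e" "e \<subseteq> hvertices G"
    using i by (auto simp: bad_events_def hvertices_def)
  then have resampled: "{y \<in> {..<M}. occurs f i (\<phi>(pivot i := y))} =
      {y \<in> {..<M}. inj_on \<phi> e \<and> y \<in> f (\<phi> ` e)}"
    unfolding Hit pivot.simps occurs_Hit_fun_upd[OF e(2)] by simp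
  show ?thesis
  proof (cases "inj_on \<phi> e")
    case True
    have "\<phi> ` e \<in> complete_edges M k"
      using True e U \<phi> by (intro image_mem_complete_edges) (auto simp: uniform_hypergraph_def)
    then have "f (\<phi> ` e) \<in> complete_edges M k"
      using f by (simp add: admissible_map_def)
    then have "finite (f (\<phi> ` e))" "card (f (\<phi> ` e)) = k"
      by (auto simp: complete_edges_def intro: finite_subset)
    moreover have "{y \<in> {..<M}. inj_on \<phi> e \<and> y \<in> f (\<phi> ` e)} \<subseteq> f (\<phi> ` e)"
      by blast
    ultimately show ?thesis
      unfolding resampled by (metis card_mono)
  next
    case False
    then show ?thesis
      unfolding resampled by simp
  qed
qed

lemma card_bad_events_at_le:
  assumes U: "uniform_hypergraph k G" and k: "0 < k"
  shows "card {j \<in> bad_events G. x \<in> support j}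
    \<le> 2 * card (hvertices G) + max_degree G * card (hvertices G) + card G"
proof -
  let ?V = "hvertices G" and ?G\<^sub>x = "{e \<in> G. x \<in> e}"
  let ?C = "Collision x ` ?V \<union> (\<lambda>a. Collision a x) ` ?V"
  let ?H = "case_prod Hit ` (?G\<^sub>x \<times> ?V) \<union> (\<lambda>e. Hit e x) ` G"
  have finV: "finite ?V" and finG: "finite G"
    using finite_hvertices[OF U k] U by (auto simp: uniform_hypergraph_def)
  have "{j \<in> bad_events G. x \<in> support j} \<subseteq> ?C \<union> ?H"
  proof
    fix j assume "j \<in> {j \<in> bad_events G. x \<in> support j}"
    then consider (Collision) a b where "j = Collision a b" "a \<in> ?V" "b \<in> ?V" "x \<in> {a, b}"
      | (Hit) e u where "j = Hit e u" "e \<in> G" "u \<in> ?V" "x \<in> insert u e"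
      by (auto simp: bad_events_def)
    then show "j \<in> ?C \<union> ?H"
      by cases auto
  qed
  then have "card {j \<in> bad_events G. x \<in> support j} \<le> card (?C \<union> ?H)"
    using finV finG by (intro card_mono) auto
  also have "\<dots> \<le> card ?C + card ?H"
    by (rule card_Un_le)
  also have "card ?C \<le> card ?V + card ?V"
    using finV by (intro order_trans[OF card_Un_le] add_mono card_image_le)
  also have "card ?H \<le> card (?G\<^sub>x \<times> ?V) + card G"
    using finV finG by (intro order_trans[OF card_Un_le] add_mono card_image_le) auto
  also have "card (?G\<^sub>x \<times> ?V) \<le> max_degree G * card ?V"
    using hdegree_le_max_degree[OF finV, of x]
    by (simp add: card_cartesian_product hdegree_def)
  finally show ?thesis
    by simp
qed

lemma good_copy_if_no_bad_event:
  assumes f: "admissible_map M k f" and U: "uniform_hypergraph k G"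
    and \<phi>: "\<phi> \<in> hvertices G \<rightarrow>\<^sub>E {..<M}"
    and good: "\<And>i. i \<in> bad_events G \<Longrightarrow> \<not> occurs f i \<phi>"
  shows "inj_on \<phi> (hvertices G) \<and> \<phi> ` hvertices G \<subseteq> {..<M} \<and>
    (\<forall>e \<in> G. f (\<phi> ` e) \<inter> \<phi> ` hvertices G = {})"
proof (intro conjI ballI)
  show inj: "inj_on \<phi> (hvertices G)"
    using good[of "Collision _ _"] by (force simp: inj_on_def bad_events_def)
  show "\<phi> ` hvertices G \<subseteq> {..<M}"
    using \<phi> by auto
  fix e assume e: "e \<in> G"
  then have e_sub: "e \<subseteq> hvertices G"
    by (auto simp: hvertices_def)
  have inj_e: "inj_on \<phi> e"
    using inj e_sub by (rule inj_on_subset)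
  have "\<phi> ` e \<in> complete_edges M k"
    using inj_e e e_sub U \<phi> by (intro image_mem_complete_edges) (auto simp: uniform_hypergraph_def)
  then have "f (\<phi> ` e) \<inter> \<phi> ` e = {}"
    using f by (simp add: admissible_map_def)
  moreover have "\<phi> u \<notin> f (\<phi> ` e)" if "u \<in> hvertices G" "u \<notin> e" for u
    using good[of "Hit e u"] inj_e that e by (auto simp: bad_events_def)
  ultimately show "f (\<phi> ` e) \<inter> \<phi> ` hvertices G = {}"
    by blast
qed

lemma w_property_if_large:
  assumes k: "2 \<le> k" and U: "uniform_hypergraph k G"
    and M: "10 * k^2 * card (hvertices G) * max_degree G \<le> M"
  shows "w_property M k G"
proof (cases "G = {}")
  case True
  then show ?thesis
    by (simp add: w_property_def hvertices_def)
next
  case False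
  let ?n = "card (hvertices G)" and ?D = "max_degree G"
  have k_pos: "0 < k"
    using k by simp
  have finV: "finite (hvertices G)" and finG: "finite G"
    using finite_hvertices[OF U k_pos] U by (auto simp: uniform_hypergraph_def)
  have card_G: "card G \<le> ?n * ?D"
    using card_edges_le_card_hvertices_mult_max_degree[OF U k_pos] .
  moreover have "0 < card G"
    using False finG by (simp add: card_gt_0_iff)
  ultimately have "?n \<le> ?n * ?D" "1 \<le> ?n * ?D"
    by (cases ?D; simp)+
  have "16 * (?n * ?D) \<le> 10 * k * (?n * ?D)"
    using k by (intro mult_right_mono) auto
  then have "4 * k * (4 * (?n * ?D)) \<le> 10 * k^2 * ?n * ?D"
    using mult_le_mono2[of _ _ k] by (simp add: power2_eq_square mult_ac)
  with M have large: "4 * k * (4 * (?n * ?D)) \<le> M"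
    by linarith
  have "4 * k * 1 \<le> 4 * k * (4 * (?n * ?D))"
    using \<open>1 \<le> ?n * ?D\<close> by (intro mult_le_mono2) simp
  with large have q_small: "4 * k \<le> M"
    by linarith
  then have M_pos: "0 < M"
    using k by simp
  have sparse: "4 * k * card {j \<in> bad_events G. j \<noteq> i \<and> pivot i \<in> support j} \<le> M" for i
  proof -
    have "card {j \<in> bad_events G. j \<noteq> i \<and> pivot i \<in> support j}
        \<le> card {j \<in> bad_events G. pivot i \<in> support j}"
      using finite_bad_events[OF finG finV] by (intro card_mono) auto
    also have "\<dots> \<le> 2 * ?n + ?D * ?n + card G"
      by (rule card_bad_events_at_le[OF U k_pos])
    also have "\<dots> \<le> 4 * (?n * ?D)"
      using card_G \<open>?n \<le> ?n * ?D\<close> mult.commute[of ?D ?n] by linarith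
    finally show ?thesis
      using large by (meson le_trans mult_le_mono2)
  qed
  show ?thesis
    unfolding w_property_def
  proof (intro allI impI)
    fix f assume f: "admissible_map M k f"
    obtain \<phi> where \<phi>: "\<phi> \<in> hvertices G \<rightarrow>\<^sub>E {..<M}"
      and good: "\<forall>i \<in> bad_events G. \<not> occurs f i \<phi>"
      using resampling_local_lemma[OF finV finite_bad_events[OF finG finV] M_pos
          pivot_mem_hvertices occurs_fun_upd card_resample_occurs_le[OF f U k_pos] q_small sparse]
      by blast
    show "\<exists>\<phi> :: 'a \<Rightarrow> nat. inj_on \<phi> (hvertices G) \<and> \<phi> ` hvertices G \<subseteq> {..<M} \<and>
        (\<forall>e \<in> G. f (\<phi> ` e) \<inter> \<phi> ` hvertices G = {})"
      using good_copy_if_no_bad_event[OF f U \<phi>] good by blast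
  qed
qed

theorem proposition3p4:
  fixes G :: "'a set set" and k :: nat
  assumes "k \<ge> 2"
    and "uniform_hypergraph k G"
  shows "w_number k G \<le> 10 * k^2 * card (hvertices G) * max_degree G"
  unfolding w_number_def using w_property_if_large[OF assms] by (intro Least_le) blast

end
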